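(* Let $\mathbf L\in\mathbb R_+^{n\times k}$. Let $\mathbf p\in\Delta_n$ and $t\in\operatorname{argmin}_{t'\in[k]}\mathbf p^\top\boldsymbol\ell_{t'}$ (equivalently $\mathbf p\in\mathcal Q^{\mathbf L}_t$). Then \[ \mathrm{CCdim}(\mathbf L)\ \ge\ \|\mathbf p\|_0-\mu_{\mathcal Q^{\mathbf L}_t}(\mathbf p)-1 . \]
   Context: Notation: $[m]=\{1,\dots,m\}$; $\Delta_n=\{\mathbf p\in\mathbb R_+^n:\sum_i p_i=1\}$; $\|\mathbf p\|_0$ is the number of nonzero entries of $\mathbf p$. A loss matrix $\mathbf L\in\mathbb R_+^{n\times k}$ has columns $\boldsymbol\ell_t$, $t\in[k]$. Standing assumption: for each $t\in[k]$ there is $\mathbf p\in\Delta_n$ with $\operatorname{argmin}_{t'}\mathbf p^\top\boldsymbol\ell_{t'}=\{t\}$. Trigger probability set: $\mathcal Q^{\mathbf L}_t=\{\mathbf p\in\Delta_n: t\in\operatorname{argmin}_{t'\in[k]}\mathbf p^\top\boldsymbol\ell_{t'}\}$. For a convex set $\mathcal Q\subseteq\mathbb R^n$ and $\mathbf p\in\mathcal Q$, $\mathcal F_{\mathcal Q}(\mathbf p)=\{\mathbf v:\exists\epsilon_0>0,\ \mathbf p+\epsilon\mathbf v\in\mathcal Q\ \forall\epsilon\in(0,\epsilon_0)\}$ and $\mu_{\mathcal Q}(\mathbf p)=\dim(\mathcal F_{\mathcal Q}(\mathbf p)\cap(-\mathcal F_{\mathcal Q}(\mathbf p)))$. A surrogate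 loss $\boldsymbol\psi:\mathcal C\to\mathbb R_+^n$ ($\mathcal C\subseteq\mathbb R^d$ convex) is $\mathbf L$-calibrated if there is $\mathrm{pred}:\mathcal C\to[k]$ such that for all $\mathbf q\in\Delta_n$: $\inf_{\mathbf u\in\mathcal C:\mathrm{pred}(\mathbf u)\notin\operatorname{argmin}_{t}\mathbf q^\top\boldsymbol\ell_{t}}\mathbf q^\top\boldsymbol\psi(\mathbf u)>\inf_{\mathbf u\in\mathcal C}\mathbf q^\top\boldsymbol\psi(\mathbf u)$. $\mathrm{CCdim}(\mathbf L)$ is the smallest $d\in\mathbb Z_+$ for which there exist a convex set $\mathcal C\subseteq\mathbb R^d$ and a convex (componentwise convex) $\mathbf L$-calibrated surrogate $\boldsymbol\psi:\mathcal C\to\mathbb R_+^n$ ($\infty$ if none exists). *)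

theory Defs
  imports "HOL-Analysis.Analysis" "HOL-Library.Extended_Nat" "HOL-Library.Extended_Real"
begin

definition prob_simplex :: "(real ^ 'n) set" where
  "prob_simplex = {p. (\<forall>i. 0 \<le> p $ i) \<and> (\<Sum>i\<in>UNIV. p $ i) = 1}"

definition l0norm :: "real ^ 'n \<Rightarrow> nat" where
  "l0norm p = card {i. p $ i \<noteq> 0}"

text \<open>Loss matrix L with rows indexed by 'n (outcomes) and columns by 'k (predictions);
  the column t is the loss vector of prediction t.\<close>
definition loss_argmin :: "real ^ 'k ^ 'n \<Rightarrow> real ^ 'n \<Rightarrow> 'k set" where
  "loss_argmin L p = {t. \<forall>t'. p \<bullet> column t L \<le> p \<bullet> column t' L}"

definition trigger_set :: "real ^ 'k ^ 'n \<Rightarrow> 'k \<Rightarrow> (real ^ 'n) set" where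
  "trigger_set L t = {p \<in> prob_simplex. t \<in> loss_argmin L p}"

definition feasible_dirs :: "'a::real_vector set \<Rightarrow> 'a \<Rightarrow> 'a set" where
  "feasible_dirs Q p = {v. \<exists>e0>0. \<forall>e. 0 < e \<and> e < e0 \<longrightarrow> p + e *\<^sub>R v \<in> Q}"

definition mu_dim :: "'a::euclidean_space set \<Rightarrow> 'a \<Rightarrow> nat" where
  "mu_dim Q p = dim (feasible_dirs Q p \<inter> uminus ` feasible_dirs Q p)"

text \<open>Points of R^d are represented as functions nat => real vanishing outside {..<d}.
  Convexity for such sets/functions is spelled out explicitly.\<close>
definition Rd :: "nat \<Rightarrow> (nat \<Rightarrow> real) set" where
  "Rd d = {u. \<forall>i\<ge>d. u i = 0}"

definition convex_fset :: "(nat \<Rightarrow> real) set \<Rightarrow> bool" where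
  "convex_fset C = (\<forall>x\<in>C. \<forall>y\<in>C. \<forall>a::real. 0 \<le> a \<and> a \<le> 1 \<longrightarrow>
      (\<lambda>i. a * x i + (1 - a) * y i) \<in> C)"

definition convex_fon :: "(nat \<Rightarrow> real) set \<Rightarrow> ((nat \<Rightarrow> real) \<Rightarrow> real) \<Rightarrow> bool" where
  "convex_fon C f = (\<forall>x\<in>C. \<forall>y\<in>C. \<forall>a::real. 0 \<le> a \<and> a \<le> 1 \<longrightarrow>
      f (\<lambda>i. a * x i + (1 - a) * y i) \<le> a * f x + (1 - a) * f y)"

text \<open>Calibration; infima are taken in the extended reals so that inf of the empty set is +infinity.\<close>
definition calibrated ::
  "real ^ 'k ^ 'n \<Rightarrow> (nat \<Rightarrow> real) set \<Rightarrow> ((nat \<Rightarrow> real) \<Rightarrow> real ^ 'n) \<Rightarrow> bool" where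
  "calibrated L C psi = (\<exists>pred :: (nat \<Rightarrow> real) \<Rightarrow> 'k. \<forall>q\<in>prob_simplex.
      (INF u\<in>{u\<in>C. pred u \<notin> loss_argmin L q}. ereal (q \<bullet> psi u))
        > (INF u\<in>C. ereal (q \<bullet> psi u)))"

definition convex_calibrated_in_dim :: "real ^ 'k ^ 'n \<Rightarrow> nat \<Rightarrow> bool" where
  "convex_calibrated_in_dim L d = (\<exists>C psi. C \<subseteq> Rd d \<and> convex_fset C \<and>
      (\<forall>u\<in>C. \<forall>i. 0 \<le> psi u $ i) \<and> (\<forall>i. convex_fon C (\<lambda>u. psi u $ i)) \<and>
      calibrated L C psi)"

definition CCdim :: "real ^ 'k ^ 'n \<Rightarrow> enat" where
  "CCdim L = (if \<exists>d. convex_calibrated_in_dim L d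
              then enat (LEAST d. convex_calibrated_in_dim L d) else \<infinity>)"

end

theory Submission
  imports Defs
begin

text \<open>
  Let Y be the support of p and let psi be a convex calibrated surrogate on a convex subset of
  R^d. Approximate Lagrange duality for finitely many candidate points yields, for every
  tolerance, a point u together with multipliers g y (summing to zero) such that u nearly minimises
  each Lagrangian p_y psi_y + g_y . u. This makes u nearly optimal for every q supported on Y
  whose deviation q - p is orthogonal to d vectors built from the multipliers. If the support of p
  exceeded dim(equalizing directions) + d + 1, a dimension count would give a unit direction w
  orthogonal to these vectors and to all equalizing directions, with u nearly optimal at both
  p + c w and p - c w. In the limit, calibration makes a single prediction optimal at both points,
  which forces w to be an equalizing direction: a contradiction. Equalizing directions, i.e. those
  supported on Y, summing to zero and keeping t tied with the other optimal predictions, are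
  feasible for the trigger set in both senses, so their dimension is at most mu.
\<close>

section \<open>Convex combinations and finite Lagrange duality\<close>

lemma convex_fon_finite_combination:
  fixes C :: "(nat \<Rightarrow> real) set" and x :: "'a \<Rightarrow> nat \<Rightarrow> real"
  assumes cC: "convex_fset C" and cf: "convex_fon C f" and fin: "finite S" and ne: "S \<noteq> {}"
    and nn: "\<forall>j\<in>S. 0 \<le> \<mu> j" and s1: "sum \<mu> S = 1" and xC: "\<forall>j\<in>S. x j \<in> C"
  shows "(\<lambda>i. \<Sum>j\<in>S. \<mu> j * x j i) \<in> C \<and> f (\<lambda>i. \<Sum>j\<in>S. \<mu> j * x j i) \<le> (\<Sum>j\<in>S. \<mu> j * f (x j))"
  using fin ne nn s1 xC
proof (induction S arbitrary: \<mu> rule: finite_ne_induct)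
  case (singleton a)
  then show ?case by simp
next
  case (insert a S)
  define s where "s = 1 - \<mu> a"
  have sS: "sum \<mu> S = s" using insert by (simp add: s_def)
  have "0 \<le> s" using sS insert sum_nonneg[of S \<mu>] by simp
  show ?case
  proof (cases "s = 0")
    case True
    then have "\<forall>j\<in>S. \<mu> j = 0" using sS insert sum_nonneg_eq_0_iff[of S \<mu>] by auto
    moreover have "\<mu> a = 1" using True s_def by simp
    ultimately show ?thesis using insert by (simp add: fun_eq_iff)
  next
    case False
    with \<open>0 \<le> s\<close> have spos: "0 < s" by simp
    define z where "z = (\<lambda>i. \<Sum>j\<in>S. \<mu> j / s * x j i)"
    have IH: "z \<in> C \<and> f z \<le> (\<Sum>j\<in>S. \<mu> j / s * f (x j))"
      unfolding z_def using insert spos sS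
      by (intro insert.IH) (auto simp: sum_divide_distrib[symmetric])
    have am: "0 \<le> \<mu> a" "\<mu> a \<le> 1" using insert \<open>0 \<le> s\<close> s_def by auto
    have eq: "(\<lambda>i. \<Sum>j\<in>insert a S. \<mu> j * x j i) = (\<lambda>i. \<mu> a * x a i + (1 - \<mu> a) * z i)"
      using insert spos by (simp add: fun_eq_iff z_def s_def[symmetric] sum_distrib_left)
    have "f (\<lambda>i. \<mu> a * x a i + (1 - \<mu> a) * z i) \<le> \<mu> a * f (x a) + (1 - \<mu> a) * f z"
      using cf IH insert am unfolding convex_fon_def by auto
    also have "(1 - \<mu> a) * f z \<le> (1 - \<mu> a) * (\<Sum>j\<in>S. \<mu> j / s * f (x j))"
      using IH am by (intro mult_left_mono) auto
    also have "(1 - \<mu> a) * (\<Sum>j\<in>S. \<mu> j / s * f (x j)) = (\<Sum>j\<in>S. \<mu> j * f (x j))"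
      using spos by (simp add: s_def[symmetric] sum_distrib_left)
    finally show ?thesis
      using eq cC IH insert am unfolding convex_fset_def by auto
  qed
qed

lemma convex_hull_image_weights:
  fixes G :: "'a \<Rightarrow> 'b::real_vector"
  assumes fin: "finite S" and z: "z \<in> convex hull (G ` S)"
  obtains \<mu> where "\<forall>J\<in>S. 0 \<le> \<mu> J" "sum \<mu> S = 1" "z = (\<Sum>J\<in>S. \<mu> J *\<^sub>R G J)"
proof -
  obtain w where w: "\<forall>x\<in>G ` S. 0 \<le> w x" "sum w (G ` S) = 1" "(\<Sum>x\<in>G ` S. w x *\<^sub>R x) = z"
    using z unfolding convex_hull_finite[OF finite_imageI[OF fin]] by blast
  \<comment> \<open>the weight of each image point is shared equally among its preimages\<close>
  define c where "c v = real (card {J \<in> S. G J = v})" for v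
  have cpos: "c v > 0" if "v \<in> G ` S" for v
    using that fin unfolding c_def by (auto simp: card_gt_0_iff)
  define \<mu> where "\<mu> J = w (G J) / c (G J)" for J
  have fibre: "sum \<mu> {J \<in> S. G J = v} = w v" if "v \<in> G ` S" for v
  proof -
    have "sum \<mu> {J \<in> S. G J = v} = (\<Sum>J\<in>{J \<in> S. G J = v}. w v / c v)"
      by (intro sum.cong) (auto simp: \<mu>_def)
    also have "\<dots> = w v"
      using cpos[OF that] by (simp add: c_def)
    finally show ?thesis .
  qed
  have "(\<Sum>J\<in>S. \<mu> J *\<^sub>R G J) = (\<Sum>v\<in>G ` S. \<Sum>J\<in>{J \<in> S. G J = v}. \<mu> J *\<^sub>R v)"
  proof -
    have "(\<Sum>J\<in>S. \<mu> J *\<^sub>R G J) = (\<Sum>v\<in>G ` S. \<Sum>J\<in>{J \<in> S. G J = v}. \<mu> J *\<^sub>R G J)"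
      by (rule sum.image_gen[OF fin])
    then show ?thesis by (auto intro!: sum.cong)
  qed
  also have "\<dots> = z"
    using w(3) fibre by (simp add: scaleR_sum_left[symmetric])
  finally have "z = (\<Sum>J\<in>S. \<mu> J *\<^sub>R G J)" ..
  moreover have "sum \<mu> S = 1"
    using w(2) fibre by (simp add: sum.image_gen[OF fin, of \<mu> G])
  moreover have "\<forall>J\<in>S. 0 \<le> \<mu> J"
    using w(1) cpos by (auto simp: \<mu>_def intro!: divide_nonneg_pos)
  ultimately show ?thesis using that by blast
qed

lemma finite_approx_lagrange_duality:
  fixes \<phi> :: "'a \<Rightarrow> 'v::euclidean_space" and f :: "'a \<Rightarrow> real"
  assumes fin: "finite S" and J0: "J0 \<in> S" "\<phi> J0 = 0" and eps: "0 < \<epsilon>"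
  obtains \<mu> \<theta> where "\<forall>J\<in>S. 0 \<le> \<mu> J" "sum \<mu> S = 1" "(\<Sum>J\<in>S. \<mu> J *\<^sub>R \<phi> J) = 0"
    "\<forall>J\<in>S. (\<Sum>J'\<in>S. \<mu> J' * f J') \<le> f J + \<theta> \<bullet> \<phi> J + \<epsilon>"
proof -
  define G where "G J = (\<phi> J, f J)" for J
  define H where "H = convex hull (G ` S)"
  define T where "T = {t. (0, t) \<in> H}"
  have cpt: "compact H"
    unfolding H_def using fin by (simp add: finite_imp_compact_convex_hull)
  have GH: "G J \<in> H" if "J \<in> S" for J
    unfolding H_def using that by (simp add: hull_inc)
  have "T \<noteq> {}"
    using GH[OF J0(1)] J0(2) by (auto simp: T_def G_def)
  moreover have "bdd_below T"
  proof -
    obtain B where B: "\<forall>z\<in>H. norm z \<le> B"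
      using compact_imp_bounded[OF cpt] unfolding bounded_iff by blast
    have "- B \<le> t" if "t \<in> T" for t
    proof -
      have "norm ((0::'v), t) \<le> B"
        using B that unfolding T_def by blast
      then show ?thesis
        by (simp add: norm_Pair)
    qed
    then show ?thesis
      by (rule bdd_belowI[of T "- B"])
  qed
  ultimately obtain ts where ts: "(0, ts) \<in> H" "ts < Inf T + \<epsilon>/2"
    using cInf_less_iff[of T "Inf T + \<epsilon>/2"] eps unfolding T_def by auto
  have below: "Inf T \<le> t" if "(0, t) \<in> H" for t
    using cInf_lower[OF _ \<open>bdd_below T\<close>] that unfolding T_def by simp
  have notin: "(0, Inf T - \<epsilon>/2) \<notin> H"
  proof
    assume "(0, Inf T - \<epsilon>/2) \<in> H"
    then have "Inf T \<le> Inf T - \<epsilon>/2"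
      by (rule below)
    with eps show False by simp
  qed
  have "convex H"
    unfolding H_def by simp
  then obtain a b where ab: "a \<bullet> (0, Inf T - \<epsilon>/2) < b" "\<forall>z\<in>H. b < a \<bullet> z"
    using separating_hyperplane_closed_point[OF _ compact_imp_closed[OF cpt] notin] by blast
  obtain A \<alpha> where a: "a = (A, \<alpha>)"
    by (cases a)
  have "b < \<alpha> * ts"
    using ab(2) ts(1) unfolding a by force
  \<comment> \<open>the hyperplane is not vertical, since it separates (0, Inf T - e/2) from (0, ts) above it\<close>
  then have "\<alpha> * (Inf T - \<epsilon>/2) < \<alpha> * ts"
    using ab(1) unfolding a by simp
  then have \<alpha>: "0 < \<alpha>"
    using below[OF ts(1)] eps mult_left_mono_neg[of "Inf T - \<epsilon>/2" ts \<alpha>] by linarith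
  have dual: "Inf T - \<epsilon>/2 < f J + (A /\<^sub>R \<alpha>) \<bullet> \<phi> J" if "J \<in> S" for J
  proof -
    have "b < A \<bullet> \<phi> J + \<alpha> * f J"
      using ab(2) GH[OF that] unfolding a G_def by force
    moreover have "\<alpha> * (f J + (A /\<^sub>R \<alpha>) \<bullet> \<phi> J) = A \<bullet> \<phi> J + \<alpha> * f J"
      using \<alpha> by (simp add: algebra_simps)
    ultimately have "\<alpha> * (Inf T - \<epsilon>/2) < \<alpha> * (f J + (A /\<^sub>R \<alpha>) \<bullet> \<phi> J)"
      using ab(1) unfolding a by simp
    then show ?thesis
      using \<alpha> by simp
  qed
  obtain \<mu> where \<mu>: "\<forall>J\<in>S. 0 \<le> \<mu> J" "sum \<mu> S = 1" "(0, ts) = (\<Sum>J\<in>S. \<mu> J *\<^sub>R G J)"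
    using convex_hull_image_weights[OF fin ts(1)[unfolded H_def]] by blast
  have "(\<Sum>J\<in>S. \<mu> J *\<^sub>R \<phi> J) = 0" "(\<Sum>J\<in>S. \<mu> J * f J) = ts"
    using arg_cong[OF \<mu>(3), of fst] arg_cong[OF \<mu>(3), of snd]
    by (simp_all add: fst_sum snd_sum G_def)
  moreover have "\<forall>J\<in>S. ts \<le> f J + (A /\<^sub>R \<alpha>) \<bullet> \<phi> J + \<epsilon>"
    using dual ts(2) by fastforce
  ultimately show ?thesis
    using that[of \<mu> "A /\<^sub>R \<alpha>"] \<mu>(1,2) by simp
qed

section \<open>Approximate Lagrange multipliers\<close>

lemma PiE_weighted_sum_componentwise_bound:
  fixes val :: "'y \<Rightarrow> 'b \<Rightarrow> real"
  assumes fin: "finite Y" "finite F"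
    and \<mu>: "\<forall>J\<in>PiE Y (\<lambda>_. F). 0 \<le> \<mu> J" "sum \<mu> (PiE Y (\<lambda>_. F)) = 1"
    and bound: "\<forall>J\<in>PiE Y (\<lambda>_. F).
      (\<Sum>J'\<in>PiE Y (\<lambda>_. F). \<mu> J' * (\<Sum>y\<in>Y. val y (J' y))) \<le> (\<Sum>y\<in>Y. val y (J y)) + \<epsilon>"
    and y: "y \<in> Y" and a: "a \<in> F"
  shows "(\<Sum>J\<in>PiE Y (\<lambda>_. F). \<mu> J * val y (J y)) \<le> val y a + \<epsilon>"
proof -
  define Js where "Js = PiE Y (\<lambda>_. F)"
  define B where "B y = (\<Sum>J\<in>Js. \<mu> J * val y (J y))" for y
  define m where "m y = Min (val y ` F)" for y
  have "\<exists>b\<in>F. val y b = m y" for y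
    unfolding m_def using fin(2) a by (metis Min_in empty_iff finite_imageI image_iff image_is_empty)
  then obtain bmin where bmin: "\<And>y. bmin y \<in> F" "\<And>y. val y (bmin y) = m y"
    by metis
  have m_le: "m y \<le> val y b" if "b \<in> F" for y b
    unfolding m_def using fin(2) that by simp
  have B_ge: "m y \<le> B y" if "y \<in> Y" for y
  proof -
    have "(\<Sum>J\<in>Js. \<mu> J * m y) \<le> B y"
      unfolding B_def using \<mu>(1) m_le that
      by (intro sum_mono mult_left_mono) (auto simp: Js_def)
    then show ?thesis
      using \<mu>(2) by (simp add: Js_def sum_distrib_right[symmetric])
  qed
  have "(\<Sum>y\<in>Y. B y) = (\<Sum>J\<in>Js. \<mu> J * (\<Sum>y\<in>Y. val y (J y)))"
    unfolding B_def by (simp add: sum_distrib_left sum.swap[of _ Y])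
  also have "\<dots> \<le> (\<Sum>y\<in>Y. m y) + \<epsilon>"
    using bound[rule_format, of "restrict bmin Y"] bmin by (simp add: Js_def)
  finally have "(\<Sum>y\<in>Y. B y - m y) \<le> \<epsilon>"
    by (simp add: sum_subtractf)
  moreover have "B y - m y \<le> (\<Sum>y\<in>Y. B y - m y)"
    using B_ge y fin(1) by (intro member_le_sum) auto
  ultimately show ?thesis
    using m_le[OF a, of y] unfolding B_def Js_def by simp
qed

lemma inner_eq_sum_support:
  fixes q x :: "real^'n"
  assumes "\<forall>y. y \<notin> Y \<longrightarrow> q$y = 0"
  shows "q \<bullet> x = (\<Sum>y\<in>Y. q$y * x$y)"
  unfolding inner_vec_def inner_real_def using assms
  by (intro sum.mono_neutral_right) auto

lemma inner_le_of_componentwise_lagrangian: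
  fixes x z q p :: "real^'n" and g :: "'n \<Rightarrow> 'v::real_inner"
  assumes p: "\<forall>y\<in>Y. 0 < p$y" and q: "\<forall>y. 0 \<le> q$y" "\<forall>y. y \<notin> Y \<longrightarrow> q$y = 0"
    and comp: "\<forall>y\<in>Y. p$y * x$y + g y \<bullet> eu \<le> p$y * z$y + g y \<bullet> ea + \<epsilon>"
    and orth: "(\<Sum>y\<in>Y. (q$y / p$y) *\<^sub>R g y) \<bullet> (ea - eu) = 0"
  shows "q \<bullet> x \<le> q \<bullet> z + \<epsilon> * (\<Sum>y\<in>Y. q$y / p$y)"
proof -
  have "q$y * x$y \<le> q$y * z$y + (q$y / p$y) * (g y \<bullet> (ea - eu)) + \<epsilon> * (q$y / p$y)"
    if y: "y \<in> Y" for y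
  proof -
    have "(q$y / p$y) * (p$y * x$y) \<le> (q$y / p$y) * (p$y * z$y + g y \<bullet> (ea - eu) + \<epsilon>)"
      using comp y p q(1) by (intro mult_left_mono) (auto simp: inner_diff_right)
    moreover have "p$y \<noteq> 0"
      using p y by force
    ultimately show ?thesis
      by (simp add: algebra_simps)
  qed
  then have "(\<Sum>y\<in>Y. q$y * x$y) \<le> (\<Sum>y\<in>Y. q$y * z$y + (q$y / p$y) * (g y \<bullet> (ea - eu))
      + \<epsilon> * (q$y / p$y))"
    by (rule sum_mono)
  also have "\<dots> = (\<Sum>y\<in>Y. q$y * z$y) + (\<Sum>y\<in>Y. (q$y / p$y) *\<^sub>R g y) \<bullet> (ea - eu)
      + \<epsilon> * (\<Sum>y\<in>Y. q$y / p$y)"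
    by (simp add: sum.distrib sum_distrib_left inner_sum_left)
  finally show ?thesis
    using orth inner_eq_sum_support[OF q(2)] by simp
qed

lemma inner_differences_to_base:
  fixes \<theta> :: "'v::real_inner^'n" and e :: "'n \<Rightarrow> 'v"
  assumes y0: "y0 \<in> Y"
  shows "\<theta> \<bullet> (\<chi> y. if y \<in> Y then e y - e y0 else 0)
    = (\<Sum>y\<in>Y. (\<theta>$y - (if y = y0 then \<Sum>y'\<in>Y. \<theta>$y' else 0)) \<bullet> e y)"
proof -
  have "\<theta> \<bullet> (\<chi> y. if y \<in> Y then e y - e y0 else 0) = (\<Sum>y\<in>Y. \<theta>$y \<bullet> (e y - e y0))"
    unfolding inner_vec_def by (subst sum.mono_neutral_right[of UNIV Y]) auto
  also have "\<dots> = (\<Sum>y\<in>Y. \<theta>$y \<bullet> e y) - (\<Sum>y\<in>Y. \<theta>$y) \<bullet> e y0"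
    by (simp add: inner_diff_right sum_subtractf inner_sum_left)
  also have "\<dots> = (\<Sum>y\<in>Y. \<theta>$y \<bullet> e y - (if y = y0 then (\<Sum>y'\<in>Y. \<theta>$y') \<bullet> e y else 0))"
    using y0 by (simp add: sum_subtractf sum.delta)
  finally show ?thesis
    by (simp add: inner_diff_left if_distrib[of "\<lambda>x. x \<bullet> _"] cong: if_cong)
qed

lemma Rd_eq_if_coordinates_eq:
  assumes "u \<in> Rd d" "v \<in> Rd d" "\<forall>i<d. \<exists>j. \<rho> j = i" "\<forall>j. u (\<rho> j) = v (\<rho> j)"
  shows "u = v"
proof
  fix i
  show "u i = v i"
  proof (cases "i < d")
    case True
    then obtain j where "\<rho> j = i"
      using assms(3) by blast
    then show ?thesis
      using assms(4) by metis
  next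
    case False
    then show ?thesis
      using assms(1,2) by (simp add: Rd_def)
  qed
qed

lemma approx_lagrangian_minimizer:
  fixes psi :: "(nat \<Rightarrow> real) \<Rightarrow> real^'n" and p :: "real^'n" and \<rho> :: "'n \<Rightarrow> nat"
  defines "E \<equiv> \<lambda>u. \<chi> j. u (\<rho> j)"
  assumes cC: "convex_fset C" and cpsi: "\<forall>i. convex_fon C (\<lambda>u. psi u $ i)"
    and CRd: "C \<subseteq> Rd d" and \<rho>: "\<forall>i<d. \<exists>j. \<rho> j = i" and p: "\<forall>y\<in>Y. 0 \<le> p$y"
    and y0: "y0 \<in> Y" and F: "finite F" "F \<noteq> {}" "F \<subseteq> C" and eps: "0 < \<epsilon>"
  obtains u g where "u \<in> C" "(\<Sum>y\<in>Y. g y) = 0"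
    "\<forall>y\<in>Y. \<forall>a\<in>F. p$y * psi u $ y + g y \<bullet> E u \<le> p$y * psi a $ y + g y \<bullet> E a + \<epsilon>"
proof -
  define Js where "Js = PiE Y (\<lambda>_. F)"
  have finJs: "finite Js"
    unfolding Js_def using F(1) by (simp add: finite_PiE)
  have JsC: "J y \<in> C" if "J \<in> Js" "y \<in> Y" for J y
    using that F(3) unfolding Js_def by auto
  \<comment> \<open>a point of C for each y in Y, coupled by the constraint E (J y) = E (J y0)\<close>
  define \<phi> where "\<phi> J = (\<chi> y. if y \<in> Y then E (J y) - E (J y0) else 0)" for J :: "'n \<Rightarrow> nat \<Rightarrow> real"
  define f where "f J = (\<Sum>y\<in>Y. p$y * psi (J y) $ y)" for J :: "'n \<Rightarrow> nat \<Rightarrow> real"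
  obtain a0 where a0: "a0 \<in> F"
    using F(2) by blast
  have J0: "restrict (\<lambda>_. a0) Y \<in> Js" "\<phi> (restrict (\<lambda>_. a0) Y) = 0"
    using a0 y0 by (auto simp: Js_def \<phi>_def vec_eq_iff)
  obtain \<mu> \<theta> where \<mu>: "\<forall>J\<in>Js. 0 \<le> \<mu> J" "sum \<mu> Js = 1" "(\<Sum>J\<in>Js. \<mu> J *\<^sub>R \<phi> J) = 0"
    and dual: "\<forall>J\<in>Js. (\<Sum>J'\<in>Js. \<mu> J' * f J') \<le> f J + \<theta> \<bullet> \<phi> J + \<epsilon>"
    by (rule finite_approx_lagrange_duality[where \<phi>=\<phi> and f=f, OF finJs J0 eps])
  define g where "g y = \<theta>$y - (if y = y0 then \<Sum>y'\<in>Y. \<theta>$y' else 0)" for y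
  have "(\<Sum>y\<in>Y. g y) = 0"
    unfolding g_def using y0 by (simp add: sum_subtractf sum.delta)
  define val where "val y a = p$y * psi a $ y + g y \<bullet> E a" for y a
  have val_sum: "(\<Sum>y\<in>Y. val y (J y)) = f J + \<theta> \<bullet> \<phi> J" for J
    using inner_differences_to_base[OF y0, of \<theta> "\<lambda>y. E (J y)"]
    unfolding val_def f_def \<phi>_def g_def by (simp add: sum.distrib)
  have comp: "(\<Sum>J\<in>Js. \<mu> J * val y (J y)) \<le> val y a + \<epsilon>" if "y \<in> Y" "a \<in> F" for y a
  proof -
    have "(\<Sum>J'\<in>Js. \<mu> J' * (\<theta> \<bullet> \<phi> J')) = \<theta> \<bullet> (\<Sum>J'\<in>Js. \<mu> J' *\<^sub>R \<phi> J')"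
      by (simp add: inner_sum_right)
    then have "(\<Sum>J'\<in>Js. \<mu> J' * (\<Sum>y\<in>Y. val y (J' y))) = (\<Sum>J'\<in>Js. \<mu> J' * f J')"
      using \<mu>(3) by (simp add: val_sum distrib_left sum.distrib)
    then show ?thesis
      using PiE_weighted_sum_componentwise_bound[of Y F \<mu> val \<epsilon> y a] dual \<mu>(1,2) F(1) that val_sum
      unfolding Js_def by simp
  qed
  define comb where "comb y = (\<lambda>i. \<Sum>J\<in>Js. \<mu> J * J y i)" for y
  have Js_ne: "Js \<noteq> {}"
    using \<mu>(2) by auto
  have jensen: "comb y' \<in> C \<and> psi (comb y') $ y \<le> (\<Sum>J\<in>Js. \<mu> J * psi (J y') $ y)" if "y' \<in> Y" for y y'
    using convex_fon_finite_combination[OF cC cpsi[rule_format, of y] finJs Js_ne, of \<mu> "\<lambda>J. J y'"]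
      \<mu>(1,2) JsC that unfolding comb_def by auto
  have E_comb: "E (comb y) = (\<Sum>J\<in>Js. \<mu> J *\<^sub>R E (J y))" for y
    by (simp add: E_def comb_def vec_eq_iff)
  have common: "comb y = comb y0" if "y \<in> Y" for y
  proof (rule Rd_eq_if_coordinates_eq[OF _ _ \<rho>])
    have "(\<Sum>J\<in>Js. \<mu> J *\<^sub>R \<phi> J) $ y = 0"
      using \<mu>(3) by simp
    then have "E (comb y) = E (comb y0)"
      using that by (simp add: E_comb \<phi>_def scaleR_diff_right sum_subtractf)
    then show "\<forall>j. comb y (\<rho> j) = comb y0 (\<rho> j)"
      by (simp add: E_def vec_eq_iff)
  qed (use jensen that y0 CRd in auto)
  have "val y (comb y0) \<le> val y a + \<epsilon>" if "y \<in> Y" "a \<in> F" for y a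
  proof -
    have "p$y * psi (comb y) $ y \<le> p$y * (\<Sum>J\<in>Js. \<mu> J * psi (J y) $ y)"
      using jensen[OF that(1)] p that(1) by (intro mult_left_mono) auto
    then have "val y (comb y) \<le> (\<Sum>J\<in>Js. \<mu> J * val y (J y))"
      by (simp add: val_def E_comb sum.distrib sum_distrib_left inner_sum_right algebra_simps)
    then show ?thesis
      using comp[OF that] common[OF that(1)] by simp
  qed
  then show ?thesis
    using that[of "comb y0" g] jensen y0 \<open>(\<Sum>y\<in>Y. g y) = 0\<close> unfolding val_def by blast
qed

section \<open>Near-minimisers for weight vectors supported on a set\<close>

lemma exists_pos_factor_le:
  fixes D e :: real
  assumes "0 \<le> D" "0 < e"
  obtains r where "0 < r" "r * D \<le> e"
proof
  show "0 < e / (D + 1)"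
    using assms by simp
  have "e / (D + 1) * D \<le> e / (D + 1) * (D + 1)"
    using assms by (intro mult_left_mono) auto
  then show "e / (D + 1) * D \<le> e"
    using assms by simp
qed

definition support_box :: "'n set \<Rightarrow> real \<Rightarrow> real \<Rightarrow> (real^'n) set" where
  "support_box Y a b = {q. (\<forall>y. y \<notin> Y \<longrightarrow> q$y = 0) \<and> (\<forall>y\<in>Y. a \<le> q$y \<and> q$y \<le> b)}"

lemma compact_support_box:
  fixes Y :: "'n::finite set"
  shows "compact (support_box Y a b)"
proof -
  have "support_box Y a b = cbox (\<chi> y. if y \<in> Y then a else 0) (\<chi> y. if y \<in> Y then b else 0)"
  proof (rule set_eqI)
    fix q :: "real^'n"
    have "(\<forall>i. (if i \<in> Y then a else 0) \<le> q$i \<and> q$i \<le> (if i \<in> Y then b else 0))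
        \<longleftrightarrow> (\<forall>y. y \<notin> Y \<longrightarrow> q$y = 0) \<and> (\<forall>y\<in>Y. a \<le> q$y \<and> q$y \<le> b)"
      by (intro iffI conjI allI ballI impI) (auto, (metis order.antisym)+)
    then show "q \<in> support_box Y a b \<longleftrightarrow> q \<in> cbox (\<chi> y. if y \<in> Y then a else 0) (\<chi> y. if y \<in> Y then b else 0)"
      unfolding support_box_def mem_box_cart(2) by simp
  qed
  then show ?thesis
    by simp
qed

lemma support_box_nonneg:
  assumes "q \<in> support_box Y a b" "0 \<le> a"
  shows "0 \<le> q$i"
  using assms unfolding support_box_def by (cases "i \<in> Y") force+

lemma support_box_inner_bounds:
  assumes q: "q \<in> support_box Y a b" and x: "\<forall>i. 0 \<le> x$i"
  shows "a * (\<Sum>y\<in>Y. x$y) \<le> q \<bullet> x" "q \<bullet> x \<le> b * (\<Sum>y\<in>Y. x$y)"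
proof -
  have q_Y: "\<forall>y. y \<notin> Y \<longrightarrow> q$y = 0" "\<forall>y\<in>Y. a \<le> q$y \<and> q$y \<le> b"
    using q unfolding support_box_def by auto
  have "a * (\<Sum>y\<in>Y. x$y) \<le> (\<Sum>y\<in>Y. q$y * x$y)" "(\<Sum>y\<in>Y. q$y * x$y) \<le> b * (\<Sum>y\<in>Y. x$y)"
    using q_Y(2) x by (auto simp: sum_distrib_left intro!: sum_mono mult_right_mono)
  then show "a * (\<Sum>y\<in>Y. x$y) \<le> q \<bullet> x" "q \<bullet> x \<le> b * (\<Sum>y\<in>Y. x$y)"
    using inner_eq_sum_support[OF q_Y(1)] by simp_all
qed

lemma support_box_inner_diff:
  assumes "q \<in> support_box Y a b" "q' \<in> support_box Y a' b'" and x: "\<forall>i. 0 \<le> x$i"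
  shows "\<bar>(q - q') \<bullet> x\<bar> \<le> norm (q - q') * (\<Sum>y\<in>Y. x$y)"
proof -
  have "\<forall>y. y \<notin> Y \<longrightarrow> (q - q')$y = 0"
    using assms unfolding support_box_def by auto
  then have "\<bar>(q - q') \<bullet> x\<bar> = \<bar>\<Sum>y\<in>Y. (q - q')$y * x$y\<bar>"
    by (simp add: inner_eq_sum_support)
  also have "\<dots> \<le> (\<Sum>y\<in>Y. \<bar>(q - q')$y * x$y\<bar>)"
    by (rule sum_abs)
  also have "\<dots> = (\<Sum>y\<in>Y. \<bar>(q - q')$y\<bar> * x$y)"
    using x by (simp add: abs_mult)
  also have "\<dots> \<le> (\<Sum>y\<in>Y. norm (q - q') * x$y)"
    using x component_le_norm_cart[of "q - q'"] by (intro sum_mono mult_right_mono) auto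
  finally show ?thesis
    by (simp add: sum_distrib_left)
qed

lemma near_minimizer_exists:
  fixes f :: "'a \<Rightarrow> real"
  assumes "C \<noteq> {}" "bdd_below (f ` C)" "0 < \<eta>"
  obtains a where "a \<in> C" "\<forall>v\<in>C. f a \<le> f v + \<eta>"
proof -
  obtain a where "a \<in> C" "f a < Inf (f ` C) + \<eta>"
    using cInf_less_iff[of "f ` C" "Inf (f ` C) + \<eta>"] assms by auto
  moreover have "Inf (f ` C) \<le> f v" if "v \<in> C" for v
    using assms(2) that by (simp add: cInf_lower)
  ultimately show ?thesis
    using that by force
qed

lemma near_minimizer_stable:
  fixes psi :: "(nat \<Rightarrow> real) \<Rightarrow> real^'n"
  assumes q: "q \<in> support_box Y a b" and q': "q' \<in> support_box Y a b" and a: "0 < a" "a \<le> b"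
    and psinn: "\<forall>u\<in>C. \<forall>i. 0 \<le> psi u $ i" and w: "w \<in> C"
    and near: "\<forall>v\<in>C. q' \<bullet> psi w \<le> q' \<bullet> psi v + \<eta>"
    and S_w: "(\<Sum>y\<in>Y. psi w $ y) \<le> B" and close: "norm (q - q') * (B + b * B / a) \<le> \<eta>'"
    and v: "v \<in> C"
  shows "q \<bullet> psi w \<le> q \<bullet> psi v + \<eta> + \<eta>'"
proof -
  define S where "S u = (\<Sum>y\<in>Y. psi u $ y)" for u
  have "0 \<le> S w"
    unfolding S_def using psinn w by (simp add: sum_nonneg)
  have diff: "q1 \<bullet> psi u \<le> q2 \<bullet> psi u + norm (q1 - q2) * S u"
    if "q1 \<in> support_box Y a b" "q2 \<in> support_box Y a b" "u \<in> C" for q1 q2 u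
    using support_box_inner_diff[OF that(1,2), of "psi u"] psinn that(3)
    by (simp add: S_def inner_diff_left)
  show ?thesis
  proof (cases "S v \<le> b * B / a")
    case True
    have "norm (q - q') * S w \<le> norm (q - q') * B"
      using S_w by (simp add: S_def mult_left_mono)
    then have w_moved: "q \<bullet> psi w \<le> q' \<bullet> psi w + norm (q - q') * B"
      using diff[OF q q' w] by linarith
    have "norm (q - q') * S v \<le> norm (q - q') * (b * B / a)"
      by (rule mult_left_mono[OF True]) simp
    moreover have "q' \<bullet> psi v \<le> q \<bullet> psi v + norm (q - q') * S v"
      using diff[OF q' q v] by (simp add: norm_minus_commute)
    ultimately have "q' \<bullet> psi v \<le> q \<bullet> psi v + norm (q - q') * (b * B / a)"
      by linarith
    then show ?thesis
      using w_moved near[rule_format, OF v] close by (simp add: algebra_simps)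
  next
    case False
    have "q \<bullet> psi w \<le> b * S w"
      using support_box_inner_bounds(2)[OF q, of "psi w"] psinn w by (simp add: S_def)
    also have "\<dots> \<le> b * B"
      using S_w a by (simp add: S_def)
    also have "\<dots> < a * S v"
      using False a by (simp add: field_simps)
    also have "\<dots> \<le> q \<bullet> psi v"
      using support_box_inner_bounds(1)[OF q, of "psi v"] psinn v by (simp add: S_def)
    moreover have "0 \<le> \<eta>"
      using near w by force
    moreover have "0 \<le> B"
      using \<open>0 \<le> S w\<close> S_w by (simp add: S_def)
    then have "0 \<le> norm (q - q') * (B + b * B / a)"
      using a by simp
    ultimately show ?thesis
      using close by linarith
  qed
qed

lemma finite_near_minimizer_net:
  fixes psi :: "(nat \<Rightarrow> real) \<Rightarrow> real^'n"
  assumes K: "compact K" "K \<subseteq> support_box Y a b" and a: "0 < a" "a \<le> b"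
    and C: "C \<noteq> {}" and psinn: "\<forall>u\<in>C. \<forall>i. 0 \<le> psi u $ i" and eta: "0 < \<eta>"
  obtains F where "finite F" "F \<subseteq> C" "F \<noteq> {}" "\<forall>q\<in>K. \<exists>w\<in>F. \<forall>v\<in>C. q \<bullet> psi w \<le> q \<bullet> psi v + \<eta>"
proof -
  obtain u0 where u0: "u0 \<in> C"
    using C by blast
  define S where "S u = (\<Sum>y\<in>Y. psi u $ y)" for u
  have "\<exists>w\<in>C. \<forall>v\<in>C. q \<bullet> psi w \<le> q \<bullet> psi v + \<eta>/2" if "q \<in> K" for q
  proof -
    have "0 \<le> q \<bullet> psi v" if "v \<in> C" for v
      using support_box_nonneg[of q Y a b] \<open>q \<in> K\<close> K(2) a psinn that
      by (auto intro!: sum_nonneg simp: inner_vec_def)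
    then have "bdd_below ((\<lambda>v. q \<bullet> psi v) ` C)"
      by (auto intro: bdd_belowI[of _ 0])
    then show ?thesis
      using near_minimizer_exists[OF C _ half_gt_zero[OF eta]] by metis
  qed
  then obtain w where w: "\<forall>q\<in>K. w q \<in> C \<and> (\<forall>v\<in>C. q \<bullet> psi (w q) \<le> q \<bullet> psi v + \<eta>/2)"
    by metis
  define B where "B = (b * S u0 + \<eta>) / a"
  have S_w: "S (w q) \<le> B" if q: "q \<in> K" for q
  proof -
    have "a * S (w q) \<le> q \<bullet> psi (w q)"
      using support_box_inner_bounds(1)[of q Y a b "psi (w q)"] q K(2) w psinn by (auto simp: S_def)
    also have "\<dots> \<le> q \<bullet> psi u0 + \<eta>/2"
      using w q u0 by blast
    also have "\<dots> \<le> b * S u0 + \<eta>"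
      using support_box_inner_bounds(2)[of q Y a b "psi u0"] q K(2) psinn u0 eta by (auto simp: S_def)
    finally show ?thesis
      unfolding B_def using a by (simp add: pos_le_divide_eq mult.commute)
  qed
  have "0 \<le> S u0"
    unfolding S_def using u0 psinn by (simp add: sum_nonneg)
  then have "0 \<le> B"
    unfolding B_def using a eta by simp
  define D where "D = B + b * B / a"
  have "0 \<le> D"
    unfolding D_def using \<open>0 \<le> B\<close> a by simp
  obtain r where r: "0 < r" "r * D \<le> \<eta>/2"
    using exists_pos_factor_le[OF \<open>0 \<le> D\<close> half_gt_zero[OF eta]] by blast
  obtain T where T: "T \<subseteq> K" "finite T" "K \<subseteq> (\<Union>q'\<in>T. ball q' r)"
    using compactE_image[OF K(1), of K "\<lambda>q. ball q r"] r(1) by force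
  show ?thesis
  proof (rule that[of "insert u0 (w ` T)"])
    show "finite (insert u0 (w ` T))" "insert u0 (w ` T) \<subseteq> C" "insert u0 (w ` T) \<noteq> {}"
      using T w u0 by auto
    show "\<forall>q\<in>K. \<exists>w'\<in>insert u0 (w ` T). \<forall>v\<in>C. q \<bullet> psi w' \<le> q \<bullet> psi v + \<eta>"
    proof
      fix q assume q: "q \<in> K"
      then obtain q' where q': "q' \<in> T" "norm (q - q') < r"
        using T(3) by (force simp: dist_norm norm_minus_commute)
      have "norm (q - q') * D \<le> r * D"
        using q' \<open>0 \<le> D\<close> by (simp add: mult_right_mono)
      then have "norm (q - q') * (B + b * B / a) \<le> \<eta>/2"
        using r unfolding D_def by linarith
      moreover have "q \<in> support_box Y a b" "q' \<in> support_box Y a b" "q' \<in> K"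
        using q q'(1) T(1) K(2) by auto
      ultimately have "\<forall>v\<in>C. q \<bullet> psi (w q') \<le> q \<bullet> psi v + \<eta>/2 + \<eta>/2"
        using near_minimizer_stable[of q Y a b q' C psi "w q'" "\<eta>/2" B "\<eta>/2"]
          a psinn w S_w unfolding S_def by blast
      then have "\<forall>v\<in>C. q \<bullet> psi (w q') \<le> q \<bullet> psi v + \<eta>"
        by (simp add: add.commute)
      then show "\<exists>w'\<in>insert u0 (w ` T). \<forall>v\<in>C. q \<bullet> psi w' \<le> q \<bullet> psi v + \<eta>"
        using q' by blast
    qed
  qed
qed

lemma weighted_multipliers_component:
  fixes g :: "'n::finite \<Rightarrow> real^'m" and p q :: "real^'n"
  assumes g: "(\<Sum>y\<in>Y. g y) = 0" and p: "\<forall>y\<in>Y. p$y \<noteq> 0"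
  shows "(\<Sum>y\<in>Y. (q$y / p$y) *\<^sub>R g y) $ j = (\<chi> y. if y \<in> Y then g y $ j / p$y else 0) \<bullet> (q - p)"
proof -
  have "(\<chi> y. if y \<in> Y then g y $ j / p$y else 0) \<bullet> (q - p) = (\<Sum>y\<in>Y. g y $ j / p$y * (q$y - p$y))"
    by (subst inner_eq_sum_support[of Y]) auto
  also have "\<dots> = (\<Sum>y\<in>Y. (q$y / p$y) * g y $ j - g y $ j)"
    using p by (intro sum.cong) (auto simp: field_simps)
  also have "\<dots> = (\<Sum>y\<in>Y. (q$y / p$y) *\<^sub>R g y) $ j"
    using g by (simp add: sum_subtractf vec_eq_iff)
  finally show ?thesis ..
qed

lemma constrained_near_minimizer:
  fixes psi :: "(nat \<Rightarrow> real) \<Rightarrow> real^'n" and p :: "real^'n" and \<rho> :: "'n \<Rightarrow> nat"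
  assumes cC: "convex_fset C" and cpsi: "\<forall>i. convex_fon C (\<lambda>u. psi u $ i)"
    and psinn: "\<forall>u\<in>C. \<forall>i. 0 \<le> psi u $ i" and CRd: "C \<subseteq> Rd d" and \<rho>: "\<forall>i<d. \<exists>j. \<rho> j = i"
    and p: "\<forall>y\<in>Y. 0 < p$y" and Y: "Y \<noteq> {}" and a: "0 < a" "a \<le> b" and C: "C \<noteq> {}"
    and eta: "0 < \<eta>"
  obtains u c where "u \<in> C" "\<forall>q\<in>support_box Y a b. (\<forall>j. \<rho> j < d \<longrightarrow> c j \<bullet> (q - p) = 0) \<longrightarrow>
    (\<forall>v\<in>C. q \<bullet> psi u \<le> q \<bullet> psi v + \<eta>)"
proof -
  obtain F where F: "finite F" "F \<subseteq> C" "F \<noteq> {}"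
    and net: "\<forall>q\<in>support_box Y a b. \<exists>w\<in>F. \<forall>v\<in>C. q \<bullet> psi w \<le> q \<bullet> psi v + \<eta>/2"
    using finite_near_minimizer_net[OF compact_support_box order.refl a C psinn half_gt_zero[OF eta]]
    by blast
  define M where "M = (\<Sum>y\<in>Y. b / p$y)"
  have "0 \<le> M"
    unfolding M_def using p a by (auto intro!: sum_nonneg)
  obtain \<epsilon> where "0 < \<epsilon>" and \<epsilon>M: "\<epsilon> * M \<le> \<eta>/2"
    using exists_pos_factor_le[OF \<open>0 \<le> M\<close> half_gt_zero[OF eta]] by blast
  define E where "E u = (\<chi> j. u (\<rho> j) :: real^'n)" for u :: "nat \<Rightarrow> real"
  obtain y0 where "y0 \<in> Y"
    using Y by blast
  then obtain u g where u: "u \<in> C" and g: "(\<Sum>y\<in>Y. g y) = 0"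
    and comp: "\<forall>y\<in>Y. \<forall>w\<in>F. p$y * psi u $ y + g y \<bullet> E u \<le> p$y * psi w $ y + g y \<bullet> E w + \<epsilon>"
    using approx_lagrangian_minimizer[OF cC cpsi CRd \<rho>, of Y p y0 F \<epsilon>] p F \<open>0 < \<epsilon>\<close>
    unfolding E_def by (metis less_imp_le)
  define c where "c j = (\<chi> y. if y \<in> Y then g y $ j / p$y else 0)" for j
  have "\<forall>v\<in>C. q \<bullet> psi u \<le> q \<bullet> psi v + \<eta>"
    if q: "q \<in> support_box Y a b" and constr: "\<forall>j. \<rho> j < d \<longrightarrow> c j \<bullet> (q - p) = 0" for q
  proof
    fix v assume v: "v \<in> C"
    obtain w where w: "w \<in> F" "\<forall>v\<in>C. q \<bullet> psi w \<le> q \<bullet> psi v + \<eta>/2"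
      using net q by blast
    have q_Y: "\<forall>y. 0 \<le> q$y" "\<forall>y. y \<notin> Y \<longrightarrow> q$y = 0"
      using q a support_box_nonneg[OF q] unfolding support_box_def by auto
    have "(\<Sum>y\<in>Y. (q$y / p$y) *\<^sub>R g y) \<bullet> (E w - E u) = 0"
      unfolding inner_vec_def inner_real_def
    proof (intro sum.neutral ballI)
      fix j :: 'n
      show "(\<Sum>y\<in>Y. (q$y / p$y) *\<^sub>R g y) $ j * (E w - E u) $ j = 0"
      proof (cases "\<rho> j < d")
        case True
        then show ?thesis
          using constr weighted_multipliers_component[OF g, of p q j] p unfolding c_def by force
      next
        case False
        moreover have "w \<in> Rd d" "u \<in> Rd d"
          using CRd u w(1) F(2) by auto
        ultimately have "(E w - E u) $ j = 0"
          by (simp add: E_def Rd_def)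
        then show ?thesis
          by simp
      qed
    qed
    then have "q \<bullet> psi u \<le> q \<bullet> psi w + \<epsilon> * (\<Sum>y\<in>Y. q$y / p$y)"
      using inner_le_of_componentwise_lagrangian[OF p q_Y] comp w(1) by blast
    also have "\<epsilon> * (\<Sum>y\<in>Y. q$y / p$y) \<le> \<epsilon> * M"
      unfolding M_def using q p \<open>0 < \<epsilon>\<close>
      by (intro mult_left_mono sum_mono divide_right_mono) (auto simp: support_box_def less_imp_le)
    finally show "q \<bullet> psi u \<le> q \<bullet> psi v + \<eta>"
      using \<epsilon>M w(2) v by fastforce
  qed
  then show ?thesis
    using that u by blast
qed

section \<open>A unit direction orthogonal to finitely many vectors\<close>

lemma dim_Un_le:
  fixes A B :: "'a::euclidean_space set"
  shows "dim (A \<union> B) \<le> dim A + dim B"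
proof -
  obtain SA where SA: "independent SA" "A \<subseteq> span SA" "card SA = dim A"
    by (rule basis_exists[of A])
  obtain SB where SB: "independent SB" "B \<subseteq> span SB" "card SB = dim B"
    by (rule basis_exists[of B])
  have fin: "finite (SA \<union> SB)"
    using SA(1) SB(1) by (simp add: finiteI_independent)
  have "A \<union> B \<subseteq> span (SA \<union> SB)"
    using SA(2) SB(2) span_mono[of SA "SA \<union> SB"] span_mono[of SB "SA \<union> SB"] by auto
  then have "dim (A \<union> B) \<le> dim (SA \<union> SB)"
    using dim_subset[of "A \<union> B" "span (SA \<union> SB)"] by simp
  also have "\<dots> \<le> card (SA \<union> SB)"
    using dim_le_card'[OF fin] .
  also have "\<dots> \<le> dim A + dim B"
    using card_Un_le[of SA SB] SA(3) SB(3) by simp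
  finally show ?thesis .
qed

lemma dim_orthogonal_comp:
  fixes W :: "'a::euclidean_space set"
  shows "dim (W\<^sup>\<bottom>) + dim W = DIM('a)"
proof -
  have "W\<^sup>\<bottom> = {y \<in> UNIV. \<forall>x \<in> span W. orthogonal x y}"
    by (auto simp: orthogonal_comp_def orthogonal_commute intro: orthogonal_to_span span_base)
  then show ?thesis
    using dim_subspace_orthogonal_to_vectors[of "span W" UNIV] by simp
qed

lemma unit_vector_in_orthogonal_comp:
  fixes W :: "'a::euclidean_space set"
  assumes "dim W < DIM('a)"
  obtains w where "w \<in> W\<^sup>\<bottom>" "norm w = 1"
proof -
  have "\<not> W\<^sup>\<bottom> \<subseteq> {0}"
    using dim_orthogonal_comp[of W] assms dim_eq_0[of "W\<^sup>\<bottom>"] by linarith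
  then obtain x where "x \<in> W\<^sup>\<bottom>" "x \<noteq> 0"
    by blast
  then show ?thesis
    using that[of "x /\<^sub>R norm x"] subspace_orthogonal_comp[of W] by (simp add: subspace_scale)
qed

lemma unit_direction_supported_orthogonal:
  fixes Y :: "'n::finite set" and c :: "'j \<Rightarrow> real^'n" and K :: "(real^'n) set"
  assumes "finite J" "card J + dim K + 1 < card Y"
  obtains w where "norm w = 1" "\<forall>y. y \<notin> Y \<longrightarrow> w$y = 0" "(\<Sum>i\<in>UNIV. w$i) = 0"
    "\<forall>j\<in>J. c j \<bullet> w = 0" "\<forall>x\<in>K. x \<bullet> w = 0"
proof -
  define B where "B = insert (\<chi> i. 1) ((\<lambda>y. axis y 1) ` (- Y) \<union> c ` J)"
  have "card (- Y) = CARD('n) - card Y"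
    by (simp add: Compl_eq_Diff_UNIV card_Diff_subset)
  then have "card ((\<lambda>y. axis y (1::real)) ` (- Y)) \<le> CARD('n) - card Y"
    using card_image_le[of "- Y" "\<lambda>y. axis y (1::real)"] by simp
  moreover have "card B \<le> Suc (card ((\<lambda>y. axis y (1::real)) ` (- Y) \<union> c ` J))"
    unfolding B_def using assms(1) by (simp add: card_insert_if)
  moreover have "card ((\<lambda>y. axis y (1::real)) ` (- Y) \<union> c ` J)
      \<le> card ((\<lambda>y. axis y (1::real)) ` (- Y)) + card J"
    using card_Un_le card_image_le[OF assms(1), of c] by (meson add_left_mono order_trans)
  ultimately have "card B \<le> CARD('n) - card Y + 1 + card J"
    by linarith
  moreover have "card Y \<le> CARD('n)"
    by (simp add: card_mono)
  moreover have "dim (B \<union> K) \<le> card B + dim K"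
    using dim_Un_le[of B K] dim_le_card'[of B] assms(1) by (simp add: B_def)
  ultimately have "dim (B \<union> K) < DIM(real^'n)"
    using assms(2) by simp
  then obtain w where w: "w \<in> (B \<union> K)\<^sup>\<bottom>" "norm w = 1"
    by (rule unit_vector_in_orthogonal_comp)
  then have orth: "b \<bullet> w = 0" if "b \<in> B \<union> K" for b
    using that by (simp add: orthogonal_comp_def orthogonal_def)
  show ?thesis
  proof (rule that[OF w(2)])
    show "\<forall>y. y \<notin> Y \<longrightarrow> w$y = 0"
    proof (intro allI impI)
      fix y assume "y \<notin> Y"
      then have "axis y 1 \<bullet> w = 0"
        by (intro orth) (simp add: B_def)
      then show "w$y = 0"
        by (simp add: inner_axis')
    qed
    show "(\<Sum>i\<in>UNIV. w$i) = 0"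
      using orth[of "\<chi> i. 1"] by (simp add: B_def inner_vec_def)
    show "\<forall>j\<in>J. c j \<bullet> w = 0" "\<forall>x\<in>K. x \<bullet> w = 0"
      using orth by (auto simp: B_def)
  qed
qed

section \<open>Limits and calibration\<close>

lemma convergent_subseq_with_constant_value:
  fixes f :: "nat \<Rightarrow> 'a::finite" and x :: "nat \<Rightarrow> 'b::metric_space"
  assumes S: "compact S" "\<forall>k. x k \<in> S"
  obtains h s l where "strict_mono h" "\<forall>k. f (h k) = s" "l \<in> S" "(x \<circ> h) \<longlonglongrightarrow> l"
proof -
  have "finite (range f)"
    by simp
  then obtain s where "infinite (f -` {s})"
    using inf_img_fin_dom[OF _ infinite_UNIV_nat] by blast
  then obtain h0 :: "nat \<Rightarrow> nat" where h0: "strict_mono h0" "\<forall>k. h0 k \<in> f -` {s}"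
    by (blast dest: infinite_enumerate)
  have "\<forall>k. (x \<circ> h0) k \<in> S"
    using S(2) by simp
  then obtain l r where "l \<in> S" "strict_mono r" "((x \<circ> h0) \<circ> r) \<longlonglongrightarrow> l"
    using seq_compactE[OF compact_imp_seq_compact[OF S(1)]] by blast
  moreover have "strict_mono (h0 \<circ> r)"
    using h0(1) \<open>strict_mono r\<close> by (rule strict_mono_o)
  ultimately show ?thesis
    using that[of "h0 \<circ> r" s l] h0(2) by (simp add: o_assoc)
qed

lemma INF_gap_witness:
  fixes f :: "'a \<Rightarrow> real"
  assumes "(INF u\<in>C. ereal (f u)) < (INF u\<in>{u\<in>C. P u}. ereal (f u))"
  obtains v \<delta> where "v \<in> C" "0 < \<delta>" "\<forall>u\<in>C. P u \<longrightarrow> f v + \<delta> \<le> f u"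
proof -
  obtain r where r: "(INF u\<in>C. ereal (f u)) < ereal r" "ereal r < (INF u\<in>{u\<in>C. P u}. ereal (f u))"
    using ereal_dense2[OF assms] by blast
  obtain v where v: "v \<in> C" "ereal (f v) < ereal r"
    using r(1) by (auto simp: INF_less_iff)
  have "r < f u" if "u \<in> C" "P u" for u
  proof -
    have "(INF u\<in>{u\<in>C. P u}. ereal (f u)) \<le> ereal (f u)"
      by (rule INF_lower[where f="\<lambda>u. ereal (f u)"]) (simp add: that)
    then have "ereal r < ereal (f u)"
      using r(2) by (rule order.strict_trans2[rotated])
    then show ?thesis
      by simp
  qed
  moreover have "0 < r - f v"
    using v(2) by simp
  ultimately show ?thesis
    using that[of v "r - f v"] v(1) by (simp add: less_imp_le)
qed

lemma near_minimizers_for_converging_weights: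
  fixes psi :: "(nat \<Rightarrow> real) \<Rightarrow> real^'n" and qs :: "nat \<Rightarrow> real^'n"
  assumes q: "q \<in> support_box Y a b" "\<forall>k. qs k \<in> support_box Y a b" "qs \<longlonglongrightarrow> q" and a: "0 < a"
    and psinn: "\<forall>u\<in>C. \<forall>i. 0 \<le> psi u $ i" and us: "\<forall>k. us k \<in> C"
    and near: "\<forall>k. \<forall>v\<in>C. qs k \<bullet> psi (us k) \<le> qs k \<bullet> psi v + r k" and r: "r \<longlonglongrightarrow> 0"
    and v: "v \<in> C" and \<delta>: "0 < \<delta>"
  shows "eventually (\<lambda>k. q \<bullet> psi (us k) < q \<bullet> psi v + \<delta>) sequentially"
proof -
  define S where "S u = (\<Sum>y\<in>Y. psi u $ y)" for u
  define e where "e k = norm (q - qs k)" for k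
  have bound: "q \<bullet> psi (us k) \<le> q \<bullet> psi v + (r k + e k * (S v + (b * S v + r k) / a))" for k
  proof -
    have diff: "\<bar>(q1 - q2) \<bullet> psi u\<bar> \<le> norm (q1 - q2) * S u"
      if "q1 \<in> support_box Y a b" "q2 \<in> support_box Y a b" "u \<in> C" for q1 q2 u
      using support_box_inner_diff[OF that(1,2), of "psi u"] psinn that(3) by (simp add: S_def)
    have qk: "qs k \<in> support_box Y a b" "us k \<in> C"
      using q(2) us by auto
    have "a * S (us k) \<le> qs k \<bullet> psi (us k)"
      using support_box_inner_bounds(1)[of "qs k" Y a b "psi (us k)"] q(2) psinn us by (simp add: S_def)
    also have "\<dots> \<le> qs k \<bullet> psi v + r k"
      using near v by blast
    also have "\<dots> \<le> b * S v + r k"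
      using support_box_inner_bounds(2)[of "qs k" Y a b "psi v"] q(2) psinn v by (simp add: S_def)
    finally have "e k * S (us k) \<le> e k * ((b * S v + r k) / a)"
      using a by (intro mult_left_mono) (simp_all add: e_def pos_le_divide_eq mult.commute)
    moreover have "q \<bullet> psi (us k) \<le> qs k \<bullet> psi (us k) + e k * S (us k)"
      using diff[OF q(1) qk] by (simp add: e_def inner_diff_left abs_le_iff)
    moreover have "qs k \<bullet> psi v \<le> q \<bullet> psi v + e k * S v"
      using diff[OF qk(1) q(1) v] by (simp add: e_def inner_diff_left norm_minus_commute abs_le_iff)
    moreover have "qs k \<bullet> psi (us k) \<le> qs k \<bullet> psi v + r k"
      using near v by blast
    ultimately show ?thesis
      by (simp add: distrib_left)
  qed
  have "e \<longlonglongrightarrow> 0"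
    using tendsto_norm[OF tendsto_diff[OF tendsto_const[of q] q(3)]] unfolding e_def by simp
  then have "(\<lambda>k. r k + e k * (S v + (b * S v + r k) / a)) \<longlonglongrightarrow> 0 + 0 * (S v + (b * S v + 0) / a)"
    using a by (intro tendsto_intros r) auto
  then have "eventually (\<lambda>k. r k + e k * (S v + (b * S v + r k) / a) < \<delta>) sequentially"
    using \<delta> by (auto dest: order_tendstoD(2))
  then show ?thesis
  proof eventually_elim
    case (elim k)
    then show ?case
      using bound[of k] by linarith
  qed
qed

lemma loss_argmin_of_symmetric_perturbation:
  assumes plus: "s \<in> loss_argmin L (p + w)" and minus: "s \<in> loss_argmin L (p - w)"
  shows "s \<in> loss_argmin L p" "\<forall>t'\<in>loss_argmin L p. w \<bullet> column s L = w \<bullet> column t' L"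
proof -
  have both: "p \<bullet> column s L + w \<bullet> column s L \<le> p \<bullet> column t' L + w \<bullet> column t' L"
      "p \<bullet> column s L - w \<bullet> column s L \<le> p \<bullet> column t' L - w \<bullet> column t' L" for t'
    using plus minus unfolding loss_argmin_def by (auto simp: inner_add_left inner_diff_left)
  then show s: "s \<in> loss_argmin L p"
    unfolding loss_argmin_def by (smt (verit) mem_Collect_eq)
  show "\<forall>t'\<in>loss_argmin L p. w \<bullet> column s L = w \<bullet> column t' L"
  proof
    fix t' assume "t' \<in> loss_argmin L p"
    then have "p \<bullet> column s L = p \<bullet> column t' L"
      using s unfolding loss_argmin_def by (auto intro: order.antisym)
    then show "w \<bullet> column s L = w \<bullet> column t' L"
      using both[of t'] by linarith
  qed
qed

section \<open>Equalizing directions\<close>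

definition equalizing_dirs :: "real^'k^'n \<Rightarrow> real^'n \<Rightarrow> 'k \<Rightarrow> (real^'n) set" where
  "equalizing_dirs L p t = {w. (\<forall>y. p$y = 0 \<longrightarrow> w$y = 0) \<and> (\<Sum>i\<in>UNIV. w$i) = 0 \<and>
     (\<forall>t'\<in>loss_argmin L p. w \<bullet> column t L = w \<bullet> column t' L)}"

lemma eventually_in_loss_argmin:
  fixes L :: "real^'k^'n"
  assumes t: "t \<in> loss_argmin L p" and w: "\<forall>t'\<in>loss_argmin L p. w \<bullet> column t L = w \<bullet> column t' L"
  shows "eventually (\<lambda>e. t \<in> loss_argmin L (p + e *\<^sub>R w)) (at_right (0::real))"
proof -
  have "eventually (\<lambda>e. (p + e *\<^sub>R w) \<bullet> column t L \<le> (p + e *\<^sub>R w) \<bullet> column t' L)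
      (at_right (0::real))" for t'
  proof (cases "t' \<in> loss_argmin L p")
    case True
    then have "p \<bullet> column t L = p \<bullet> column t' L" "w \<bullet> column t L = w \<bullet> column t' L"
      using t w unfolding loss_argmin_def by (auto intro: order.antisym)
    then show ?thesis
      by (simp add: inner_add_left)
  next
    case False
    \<comment> \<open>a strict inequality at p survives small perturbations\<close>
    then obtain t'' where "p \<bullet> column t'' L < p \<bullet> column t' L"
      unfolding loss_argmin_def by (auto simp: not_le)
    moreover have "p \<bullet> column t L \<le> p \<bullet> column t'' L"
      using t unfolding loss_argmin_def by blast
    ultimately have "0 < p \<bullet> (column t' L - column t L)"
      by (simp add: inner_diff_right)
    moreover have "((\<lambda>e. (p + e *\<^sub>R w) \<bullet> (column t' L - column t L))
        \<longlongrightarrow> (p + 0 *\<^sub>R w) \<bullet> (column t' L - column t L)) (at_right 0)"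
      by (intro tendsto_intros)
    ultimately have "eventually (\<lambda>e. 0 < (p + e *\<^sub>R w) \<bullet> (column t' L - column t L)) (at_right 0)"
      by (intro order_tendstoD(1)) auto
    then show ?thesis
      by eventually_elim (simp add: inner_diff_right)
  qed
  then have "eventually (\<lambda>e. \<forall>t'. (p + e *\<^sub>R w) \<bullet> column t L \<le> (p + e *\<^sub>R w) \<bullet> column t' L)
      (at_right (0::real))"
    by (rule eventually_all_finite)
  then show ?thesis
    unfolding loss_argmin_def by simp
qed

lemma equalizing_dir_feasible:
  assumes p: "p \<in> prob_simplex" and t: "t \<in> loss_argmin L p" and w: "w \<in> equalizing_dirs L p t"
  shows "w \<in> feasible_dirs (trigger_set L t) p"
proof -
  have p_nn: "\<forall>y. 0 \<le> p$y" and p_sum: "(\<Sum>i\<in>UNIV. p$i) = 1"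
    using p unfolding prob_simplex_def by auto
  have "eventually (\<lambda>e. 0 \<le> (p + e *\<^sub>R w)$y) (at_right (0::real))" for y
  proof (cases "p$y = 0")
    case True
    then show ?thesis
      using w by (simp add: equalizing_dirs_def)
  next
    case False
    then have "0 < p$y"
      using p_nn by (simp add: order_less_le)
    moreover have "((\<lambda>e. p$y + e * w$y) \<longlongrightarrow> p$y + 0 * w$y) (at_right 0)"
      by (intro tendsto_intros)
    ultimately have "eventually (\<lambda>e. 0 < p$y + e * w$y) (at_right 0)"
      by (intro order_tendstoD(1)) auto
    then show ?thesis
      by eventually_elim simp
  qed
  then have "eventually (\<lambda>e. \<forall>y. 0 \<le> (p + e *\<^sub>R w)$y) (at_right (0::real))"
    by (rule eventually_all_finite)
  moreover have "eventually (\<lambda>e. t \<in> loss_argmin L (p + e *\<^sub>R w)) (at_right (0::real))"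
    using eventually_in_loss_argmin[OF t] w by (simp add: equalizing_dirs_def)
  moreover have "(\<Sum>i\<in>UNIV. (p + e *\<^sub>R w)$i) = 1" for e
    using p_sum w by (simp add: sum.distrib sum_distrib_left[symmetric] equalizing_dirs_def)
  ultimately have "eventually (\<lambda>e. p + e *\<^sub>R w \<in> trigger_set L t) (at_right (0::real))"
    unfolding trigger_set_def prob_simplex_def by (auto elim: eventually_elim2)
  then show ?thesis
    unfolding feasible_dirs_def eventually_at_right_field by auto
qed

lemma equalizing_dirs_lineality:
  assumes "p \<in> prob_simplex" "t \<in> loss_argmin L p"
  shows "equalizing_dirs L p t \<subseteq> feasible_dirs (trigger_set L t) p \<inter> uminus ` feasible_dirs (trigger_set L t) p"
proof
  fix w assume w: "w \<in> equalizing_dirs L p t"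
  then have "- w \<in> equalizing_dirs L p t"
    by (simp add: equalizing_dirs_def sum_negf)
  then have "w \<in> uminus ` feasible_dirs (trigger_set L t) p"
    using equalizing_dir_feasible[OF assms] by (metis add.inverse_inverse image_eqI)
  then show "w \<in> feasible_dirs (trigger_set L t) p \<inter> uminus ` feasible_dirs (trigger_set L t) p"
    using equalizing_dir_feasible[OF assms w] by blast
qed

lemma near_minimizers_pred_in:
  fixes psi :: "(nat \<Rightarrow> real) \<Rightarrow> real^'n" and qs :: "nat \<Rightarrow> real^'n"
  assumes gap: "(INF u\<in>C. ereal (q \<bullet> psi u)) < (INF u\<in>{u\<in>C. pred u \<notin> A}. ereal (q \<bullet> psi u))"
    and q: "q \<in> support_box Y a b" "\<forall>k. qs k \<in> support_box Y a b" "qs \<longlonglongrightarrow> q" and a: "0 < a"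
    and psinn: "\<forall>u\<in>C. \<forall>i. 0 \<le> psi u $ i" and us: "\<forall>k. us k \<in> C"
    and near: "\<forall>k. \<forall>v\<in>C. qs k \<bullet> psi (us k) \<le> qs k \<bullet> psi v + r k" and r: "r \<longlonglongrightarrow> 0"
    and s: "\<forall>k. pred (us k) = s"
  shows "s \<in> A"
proof (rule ccontr)
  assume "s \<notin> A"
  obtain v \<delta> where v: "v \<in> C" "0 < \<delta>" and sep: "\<forall>u\<in>C. pred u \<notin> A \<longrightarrow> q \<bullet> psi v + \<delta> \<le> q \<bullet> psi u"
    using INF_gap_witness[OF gap] by blast
  obtain k where "q \<bullet> psi (us k) < q \<bullet> psi v + \<delta>"
    using eventually_happens'[OF _ near_minimizers_for_converging_weights[OF q a psinn us near r v]]
    by auto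
  moreover have "q \<bullet> psi v + \<delta> \<le> q \<bullet> psi (us k)"
    using sep us s \<open>s \<notin> A\<close> by metis
  ultimately show False
    by simp
qed

lemma perturbation_in_support_box:
  fixes p w :: "real^'n"
  assumes p: "\<forall>y\<in>Y. 2 * c \<le> p$y \<and> p$y \<le> 1" "\<forall>y. y \<notin> Y \<longrightarrow> p$y = 0" and c: "0 \<le> c" "c \<le> 1"
    and w: "\<forall>y. y \<notin> Y \<longrightarrow> w$y = 0" "norm w \<le> 1" and \<sigma>: "\<bar>\<sigma>\<bar> \<le> 1"
  shows "p + (\<sigma> * c) *\<^sub>R w \<in> support_box Y c 2"
  unfolding support_box_def
proof (intro CollectI conjI allI ballI impI)
  fix y
  assume "y \<notin> Y"
  then show "(p + (\<sigma> * c) *\<^sub>R w)$y = 0"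
    using p(2) w(1) by simp
next
  fix y
  assume y: "y \<in> Y"
  have "\<bar>w$y\<bar> \<le> 1"
    using component_le_norm_cart[of w y] w(2) by linarith
  then have "\<bar>\<sigma>\<bar> * \<bar>w$y\<bar> \<le> 1 * 1"
    using \<sigma> by (intro mult_mono) auto
  then have "c * (\<bar>\<sigma>\<bar> * \<bar>w$y\<bar>) \<le> c"
    using c(1) by (simp add: mult_left_le)
  then have "\<bar>\<sigma> * c * w$y\<bar> \<le> c"
    using c(1) by (simp add: abs_mult ac_simps)
  moreover have "2 * c \<le> p$y" "p$y \<le> 1"
    using p(1) y by auto
  ultimately show "c \<le> (p + (\<sigma> * c) *\<^sub>R w)$y" "(p + (\<sigma> * c) *\<^sub>R w)$y \<le> 2"
    using c(2) by (simp_all add: abs_le_iff)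
qed

lemma segment_near_minimizer:
  fixes psi :: "(nat \<Rightarrow> real) \<Rightarrow> real^'n" and p :: "real^'n" and K :: "(real^'n) set"
  assumes cC: "convex_fset C" and cpsi: "\<forall>i. convex_fon C (\<lambda>u. psi u $ i)"
    and psinn: "\<forall>u\<in>C. \<forall>i. 0 \<le> psi u $ i" and CRd: "C \<subseteq> Rd d" and C: "C \<noteq> {}"
    and p: "\<forall>y\<in>Y. 2 * c \<le> p$y \<and> p$y \<le> 1" "\<forall>y. y \<notin> Y \<longrightarrow> p$y = 0" and c: "0 < c" "c \<le> 1"
    and dim: "d + dim K + 1 < card Y" and eta: "0 < \<eta>"
  obtains u w where "u \<in> C" "norm w = 1" "\<forall>y. y \<notin> Y \<longrightarrow> w$y = 0" "(\<Sum>i\<in>UNIV. w$i) = 0"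
    "\<forall>x\<in>K. x \<bullet> w = 0"
    "\<forall>\<sigma>. \<bar>\<sigma>\<bar> \<le> 1 \<longrightarrow> (\<forall>v\<in>C. (p + (\<sigma> * c) *\<^sub>R w) \<bullet> psi u \<le> (p + (\<sigma> * c) *\<^sub>R w) \<bullet> psi v + \<eta>)"
proof -
  \<comment> \<open>rho indexes the d coordinates of the surrogate space by 'n, which has more than d elements\<close>
  obtain \<rho> :: "'n \<Rightarrow> nat" where \<rho>: "bij_betw \<rho> UNIV {0..<CARD('n)}"
    using ex_bij_betw_finite_nat[of "UNIV :: 'n set"] by auto
  have "d < CARD('n)"
    using dim card_mono[of UNIV Y] by simp
  then have \<rho>_onto: "\<forall>i<d. \<exists>j. \<rho> j = i"
    using \<rho> unfolding bij_betw_def by (metis UNIV_I atLeastLessThan_iff imageE le0 less_trans)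
  have "card {j. \<rho> j < d} \<le> d"
    using \<rho> card_inj_on_le[of \<rho> "{j. \<rho> j < d}" "{..<d}"] by (auto simp: bij_betw_def inj_on_def)
  then have card_J: "card {j. \<rho> j < d} + dim K + 1 < card Y"
    using dim by linarith
  have "Y \<noteq> {}"
    using dim by (cases "Y = {}") auto
  have "\<forall>y\<in>Y. 0 < p$y"
  proof
    fix y assume "y \<in> Y"
    then have "2 * c \<le> p$y"
      using p(1) by blast
    then show "0 < p$y"
      using c(1) by linarith
  qed
  have "c \<le> 2"
    using c(2) by simp
  obtain u cs where u: "u \<in> C" and near: "\<forall>q\<in>support_box Y c 2.
      (\<forall>j. \<rho> j < d \<longrightarrow> cs j \<bullet> (q - p) = 0) \<longrightarrow> (\<forall>v\<in>C. q \<bullet> psi u \<le> q \<bullet> psi v + \<eta>)"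
    by (rule constrained_near_minimizer[OF cC cpsi psinn CRd \<rho>_onto \<open>\<forall>y\<in>Y. 0 < p$y\<close> \<open>Y \<noteq> {}\<close>
          c(1) \<open>c \<le> 2\<close> C eta])
  obtain w where w: "norm w = 1" "\<forall>y. y \<notin> Y \<longrightarrow> w$y = 0" "(\<Sum>i\<in>UNIV. w$i) = 0"
    "\<forall>j\<in>{j. \<rho> j < d}. cs j \<bullet> w = 0" "\<forall>x\<in>K. x \<bullet> w = 0"
    by (rule unit_direction_supported_orthogonal[OF finite card_J])
  have "\<forall>\<sigma>. \<bar>\<sigma>\<bar> \<le> 1 \<longrightarrow>
      (\<forall>v\<in>C. (p + (\<sigma> * c) *\<^sub>R w) \<bullet> psi u \<le> (p + (\<sigma> * c) *\<^sub>R w) \<bullet> psi v + \<eta>)"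
  proof (intro allI impI)
    fix \<sigma> :: real
    assume "\<bar>\<sigma>\<bar> \<le> 1"
    have "p + (\<sigma> * c) *\<^sub>R w \<in> support_box Y c 2"
      using perturbation_in_support_box[OF p c(1)[THEN less_imp_le] c(2) w(2)] w(1) \<open>\<bar>\<sigma>\<bar> \<le> 1\<close>
      by simp
    moreover have "\<forall>j. \<rho> j < d \<longrightarrow> cs j \<bullet> (p + (\<sigma> * c) *\<^sub>R w - p) = 0"
      using w(4) by simp
    ultimately show "\<forall>v\<in>C. (p + (\<sigma> * c) *\<^sub>R w) \<bullet> psi u \<le> (p + (\<sigma> * c) *\<^sub>R w) \<bullet> psi v + \<eta>"
      using near by blast
  qed
  then show ?thesis
    by (rule that[OF u w(1,2,3,5)])
qed

lemma prob_simplex_support_margin: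
  assumes p: "p \<in> prob_simplex"
  obtains c where "0 < c" "c \<le> 1" "\<forall>y\<in>{i. p$i \<noteq> 0}. 2 * c \<le> p$y \<and> p$y \<le> 1"
proof -
  define Y where "Y = {i. p$i \<noteq> 0}"
  have p_nn: "\<forall>y. 0 \<le> p$y" and p_sum: "(\<Sum>i\<in>UNIV. p$i) = 1"
    using p unfolding prob_simplex_def by auto
  have "Y \<noteq> {}"
  proof
    assume "Y = {}"
    then have "(\<Sum>i\<in>UNIV. p$i) = 0"
      unfolding Y_def by simp
    with p_sum show False
      by simp
  qed
  then have "(\<lambda>y. p$y) ` Y \<noteq> {}"
    by blast
  moreover have "\<forall>y\<in>Y. 0 < p$y"
    using p_nn unfolding Y_def by (auto simp: order_less_le)
  ultimately have m: "0 < Min ((\<lambda>y. p$y) ` Y)" "\<forall>y\<in>Y. Min ((\<lambda>y. p$y) ` Y) \<le> p$y"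
    by (simp_all add: Min_gr_iff)
  have p_le_1: "p$y \<le> 1" for y
    using member_le_sum[of y UNIV "\<lambda>i. p$i"] p_nn p_sum by simp
  obtain y where "y \<in> Y"
    using \<open>Y \<noteq> {}\<close> by blast
  show ?thesis
  proof (rule that[of "Min ((\<lambda>y. p$y) ` Y) / 2"])
    show "0 < Min ((\<lambda>y. p$y) ` Y) / 2"
      using m(1) by simp
    have "Min ((\<lambda>y. p$y) ` Y) \<le> 1"
      using m(2) p_le_1[of y] \<open>y \<in> Y\<close> by (meson order_trans)
    then show "Min ((\<lambda>y. p$y) ` Y) / 2 \<le> 1"
      by simp
    show "\<forall>y\<in>{i. p$i \<noteq> 0}. 2 * (Min ((\<lambda>y. p$y) ` Y) / 2) \<le> p$y \<and> p$y \<le> 1"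
      using m(2) p_le_1 unfolding Y_def by simp
  qed
qed

lemma segment_limit_pred_in_argmin:
  fixes psi :: "(nat \<Rightarrow> real) \<Rightarrow> real^'n" and p wl :: "real^'n" and ws :: "nat \<Rightarrow> real^'n"
  assumes cal: "\<forall>q\<in>prob_simplex. (INF u\<in>C. ereal (q \<bullet> psi u))
      < (INF u\<in>{u\<in>C. pred u \<notin> loss_argmin L q}. ereal (q \<bullet> psi u))"
    and p: "p \<in> prob_simplex" "\<forall>y\<in>Y. 2 * c \<le> p$y \<and> p$y \<le> 1" "\<forall>y. y \<notin> Y \<longrightarrow> p$y = 0"
    and c: "0 < c" "c \<le> 1" and \<sigma>: "\<bar>\<sigma>\<bar> \<le> 1" and psinn: "\<forall>u\<in>C. \<forall>i. 0 \<le> psi u $ i"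
    and us: "\<forall>k. us k \<in> C" "\<forall>k. pred (us k) = s"
    and ws: "\<forall>k. (\<forall>y. y \<notin> Y \<longrightarrow> ws k $ y = 0) \<and> norm (ws k) = 1" "ws \<longlonglongrightarrow> wl"
    and wl: "\<forall>y. y \<notin> Y \<longrightarrow> wl$y = 0" "norm wl = 1" "(\<Sum>i\<in>UNIV. wl$i) = 0"
    and near: "\<forall>k. \<forall>v\<in>C. (p + (\<sigma> * c) *\<^sub>R ws k) \<bullet> psi (us k) \<le> (p + (\<sigma> * c) *\<^sub>R ws k) \<bullet> psi v + \<eta> k"
    and \<eta>: "\<eta> \<longlonglongrightarrow> 0"
  shows "s \<in> loss_argmin L (p + (\<sigma> * c) *\<^sub>R wl)"
proof (rule near_minimizers_pred_in[OF _ _ _ _ c(1) psinn us(1) near \<eta> us(2)])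
  define q where "q = p + (\<sigma> * c) *\<^sub>R wl"
  have in_box: "p + (\<sigma> * c) *\<^sub>R w \<in> support_box Y c 2"
    if "\<forall>y. y \<notin> Y \<longrightarrow> w$y = 0" "norm w = 1" for w
    using perturbation_in_support_box[OF p(2,3) _ c(2)] that \<sigma> c(1) by simp
  show "q \<in> support_box Y c 2"
    using in_box wl unfolding q_def by simp
  moreover have "(\<Sum>i\<in>UNIV. q$i) = 1"
    using p(1) wl(3) by (simp add: q_def prob_simplex_def sum.distrib sum_distrib_left[symmetric])
  ultimately have "q \<in> prob_simplex"
    using support_box_nonneg c(1) unfolding prob_simplex_def by fastforce
  then show "(INF u\<in>C. ereal (q \<bullet> psi u)) < (INF u\<in>{u\<in>C. pred u \<notin> loss_argmin L q}. ereal (q \<bullet> psi u))"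
    using cal by blast
  show "\<forall>k. p + (\<sigma> * c) *\<^sub>R ws k \<in> support_box Y c 2"
    using in_box ws(1) by simp
  show "(\<lambda>k. p + (\<sigma> * c) *\<^sub>R ws k) \<longlonglongrightarrow> q"
    unfolding q_def by (intro tendsto_intros ws(2))
qed

lemma card_support_le_equalizing_dim:
  fixes L :: "real^'k^'n" and p :: "real^'n"
  assumes cc: "convex_calibrated_in_dim L d" and p: "p \<in> prob_simplex" and t: "t \<in> loss_argmin L p"
  shows "card {i. p$i \<noteq> 0} \<le> dim (equalizing_dirs L p t) + d + 1"
proof (rule ccontr)
  define Y where "Y = {i. p$i \<noteq> 0}"
  define K0 where "K0 = equalizing_dirs L p t"
  assume "\<not> card {i. p$i \<noteq> 0} \<le> dim (equalizing_dirs L p t) + d + 1"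
  then have lt: "d + dim K0 + 1 < card Y"
    unfolding Y_def K0_def by linarith
  obtain C psi pred where C: "C \<subseteq> Rd d" "convex_fset C" and psinn: "\<forall>u\<in>C. \<forall>i. 0 \<le> psi u $ i"
    and cpsi: "\<forall>i. convex_fon C (\<lambda>u. psi u $ i)"
    and cal: "\<forall>q\<in>prob_simplex. (INF u\<in>C. ereal (q \<bullet> psi u))
        < (INF u\<in>{u\<in>C. pred u \<notin> loss_argmin L q}. ereal (q \<bullet> psi u))"
    using cc unfolding convex_calibrated_in_dim_def calibrated_def by blast
  have "C \<noteq> {}"
    using cal p by auto
  have p_Y: "\<forall>y. y \<notin> Y \<longrightarrow> p$y = 0"
    unfolding Y_def by simp
  obtain c0 where c0: "0 < c0" "c0 \<le> 1" "\<forall>y\<in>Y. 2 * c0 \<le> p$y \<and> p$y \<le> 1"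
    using prob_simplex_support_margin[OF p] unfolding Y_def by blast
  define \<eta> where "\<eta> = (\<lambda>k. inverse (real (Suc k)))"
  define Z where "Z = {w. (\<forall>y. y \<notin> Y \<longrightarrow> w$y = 0) \<and> (\<Sum>i\<in>UNIV. w$i) = 0 \<and> (\<forall>x\<in>K0. x \<bullet> w = 0)}"
  define near where "near u w k \<longleftrightarrow> (\<forall>\<sigma>. \<bar>\<sigma>\<bar> \<le> 1 \<longrightarrow>
      (\<forall>v\<in>C. (p + (\<sigma> * c0) *\<^sub>R w) \<bullet> psi u \<le> (p + (\<sigma> * c0) *\<^sub>R w) \<bullet> psi v + \<eta> k))" for u w k
  have "\<forall>k. \<exists>u w. u \<in> C \<and> norm w = 1 \<and> w \<in> Z \<and> near u w k"
  proof
    fix k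
    have "0 < \<eta> k"
      by (simp add: \<eta>_def)
    obtain u w where "u \<in> C" "norm w = 1" "\<forall>y. y \<notin> Y \<longrightarrow> w$y = 0" "(\<Sum>i\<in>UNIV. w$i) = 0"
      "\<forall>x\<in>K0. x \<bullet> w = 0" "near u w k"
      unfolding near_def
      by (rule segment_near_minimizer[OF C(2) cpsi psinn C(1) \<open>C \<noteq> {}\<close> c0(3) p_Y c0(1,2) lt
            \<open>0 < \<eta> k\<close>])
    then show "\<exists>u w. u \<in> C \<and> norm w = 1 \<and> w \<in> Z \<and> near u w k"
      unfolding Z_def by blast
  qed
  then obtain us where "\<forall>k. \<exists>w. us k \<in> C \<and> norm w = 1 \<and> w \<in> Z \<and> near (us k) w k"
    by (rule exE[OF choice])
  then obtain ws where uw: "\<forall>k. us k \<in> C \<and> norm (ws k) = 1 \<and> ws k \<in> Z \<and> near (us k) (ws k) k"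
    by (rule exE[OF choice])
  then have "\<forall>k. ws k \<in> sphere 0 1"
    by simp
  then obtain h s wl where h: "strict_mono h" "\<forall>k. pred (us (h k)) = s" and "wl \<in> sphere 0 1"
    and wl_lim: "(ws \<circ> h) \<longlonglongrightarrow> wl"
    by (rule convergent_subseq_with_constant_value[OF compact_sphere])
  have "subspace Z"
    unfolding subspace_def Z_def by (auto simp: inner_add_right sum.distrib sum_distrib_left[symmetric])
  then have "wl \<in> Z"
    using closed_sequentially[OF closed_subspace _ wl_lim] uw by auto
  have "s \<in> loss_argmin L (p + (\<sigma> * c0) *\<^sub>R wl)" if "\<bar>\<sigma>\<bar> \<le> 1" for \<sigma>
  proof (rule segment_limit_pred_in_argmin[OF cal p c0(3) p_Y c0(1,2) that psinn])
    show "(\<eta> \<circ> h) \<longlonglongrightarrow> 0"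
      unfolding \<eta>_def by (rule LIMSEQ_subseq_LIMSEQ[OF LIMSEQ_inverse_real_of_nat h(1)])
  qed (use uw h(2) wl_lim \<open>wl \<in> Z\<close> \<open>wl \<in> sphere 0 1\<close> that in \<open>auto simp: Z_def near_def\<close>)
  from this[of 1] this[of "-1"]
  have "s \<in> loss_argmin L p" "\<forall>t'\<in>loss_argmin L p. (c0 *\<^sub>R wl) \<bullet> column s L = (c0 *\<^sub>R wl) \<bullet> column t' L"
    using loss_argmin_of_symmetric_perturbation[of s L p "c0 *\<^sub>R wl"] by simp_all
  then have "\<forall>t'\<in>loss_argmin L p. wl \<bullet> column s L = wl \<bullet> column t' L"
    using c0(1) by simp
  then have "\<forall>t'\<in>loss_argmin L p. wl \<bullet> column t L = wl \<bullet> column t' L"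
    using t by metis
  then have "wl \<in> K0"
    using \<open>wl \<in> Z\<close> unfolding K0_def Z_def Y_def equalizing_dirs_def by auto
  then have "wl \<bullet> wl = 0"
    using \<open>wl \<in> Z\<close> unfolding Z_def by blast
  then show False
    using \<open>wl \<in> sphere 0 1\<close> by simp
qed

theorem mainTheorem11:
  fixes L :: "real ^ 'k ^ 'n" and p :: "real ^ 'n" and t :: 'k
  assumes L_nonneg: "\<forall>i j. 0 \<le> L $ i $ j"
    and standing: "\<forall>t0. \<exists>q\<in>prob_simplex. loss_argmin L q = {t0}"
    and p_simplex: "p \<in> prob_simplex"
    and t_argmin: "t \<in> loss_argmin L p"
  shows "\<forall>d. CCdim L = enat d \<longrightarrow>
           int d \<ge> int (l0norm p) - int (mu_dim (trigger_set L t) p) - 1"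
proof (intro allI impI)
  fix d
  assume CC: "CCdim L = enat d"
  then have ex: "\<exists>d. convex_calibrated_in_dim L d"
    unfolding CCdim_def by (metis enat.distinct(1))
  then have "convex_calibrated_in_dim L d"
    using CC LeastI_ex[OF ex] unfolding CCdim_def by simp
  then have "l0norm p \<le> dim (equalizing_dirs L p t) + d + 1"
    unfolding l0norm_def by (rule card_support_le_equalizing_dim[OF _ p_simplex t_argmin])
  moreover have "dim (equalizing_dirs L p t) \<le> mu_dim (trigger_set L t) p"
    unfolding mu_dim_def by (rule dim_subset[OF equalizing_dirs_lineality[OF p_simplex t_argmin]])
  ultimately show "int d \<ge> int (l0norm p) - int (mu_dim (trigger_set L t) p) - 1"
    by linarith
qed

end
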